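(* Let $\Psi\colon\mathbb R^{m+n}\to\mathbb R^m$ be the projection, $V\subseteq\mathbb R^m$ a closed subset, and $f\in C^\infty(\mathbb R^{m+n})$ with $f^{-1}(0)=\Psi^{-1}(V)$. Then there exist $g\in C^\infty(\mathbb R^{m+n})$ and $h\in C^\infty(\mathbb R^m)$ such that $h\circ\Psi=fg$ and $g^{-1}(0)=\Psi^{-1}(V)$. *)

theory Defs
  imports "HOL-Analysis.Analysis"
begin

fun Ck :: "nat \<Rightarrow> ('a::euclidean_space \<Rightarrow> real) \<Rightarrow> bool" where
  "Ck 0 f = continuous_on UNIV f"
| "Ck (Suc k) f = (f differentiable_on UNIV \<and>
      (\<forall>b\<in>Basis. Ck k (\<lambda>x. frechet_derivative f (at x) b)))"

definition smooth :: "('a::euclidean_space \<Rightarrow> real) \<Rightarrow> bool" where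
  "smooth f \<longleftrightarrow> (\<forall>k. Ck k f)"

end

theory Submission
  imports Defs "HOL-Computational_Algebra.Polynomial"
begin

text \<open>Put k(x, y) = f(x, 0); like f, the smooth function k vanishes exactly on fst -` V. Take
  g = \<theta>(k^2) / f off this set, g = 0 on it, and h(x) = \<theta>(f(x, 0)^2), so that h \<circ> fst = f g.
  Here \<theta> is smooth on the reals, positive on (0, \<infinity>), and so flat at 0 that every term
  \<theta>^(j)(k^2) / f^m is o(|q - p|) at each zero p of k; the partial derivatives of g are sums of such
  terms times smooth functions, hence g is smooth. Such a \<theta> exists because |f| has a positive lower
  bound c(N) on each compact shell {|q| \<le> N, k(q)^2 \<ge> 4^-N}: \<theta> is a series of translates of
  exp(-1/s) to the points 4^-M, with weights so small that |\<theta>^(j)| \<le> 4^-N c(N+1)^N on (0, 4^-N]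
  whenever j \<le> N.\<close>

section \<open>Smooth functions\<close>

definition partial_deriv :: "'a::euclidean_space \<Rightarrow> ('a \<Rightarrow> real) \<Rightarrow> 'a \<Rightarrow> real" where
  "partial_deriv b w x = frechet_derivative w (at x) b"

lemma Ck_Suc_iff:
  "Ck (Suc k) w \<longleftrightarrow> (\<forall>x. w differentiable (at x)) \<and> (\<forall>b\<in>Basis. Ck k (partial_deriv b w))"
  by (simp add: differentiable_on_def partial_deriv_def[abs_def])

declare Ck.simps(2) [simp del]

lemma has_derivative_partial_deriv:
  "w differentiable (at x) \<Longrightarrow> (w has_derivative (\<lambda>b. partial_deriv b w x)) (at x)"
  unfolding partial_deriv_def by (metis frechet_derivative_works)

lemma partial_deriv_eq: "(w has_derivative w') (at x) \<Longrightarrow> partial_deriv b w x = w' b"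
  unfolding partial_deriv_def by (metis frechet_derivative_at)

lemma partial_deriv_zero: "w differentiable (at x) \<Longrightarrow> partial_deriv 0 w x = 0"
  using has_derivative_linear[OF has_derivative_partial_deriv] linear_0 by blast

lemma partial_deriv_add:
  assumes "u differentiable (at x)" "v differentiable (at x)"
  shows "partial_deriv b (\<lambda>x. u x + v x) x = partial_deriv b u x + partial_deriv b v x"
  using has_derivative_add[OF assms[THEN has_derivative_partial_deriv]]
  by (rule partial_deriv_eq)

lemma partial_deriv_mult:
  assumes "u differentiable (at x)" "v differentiable (at x)"
  shows "partial_deriv b (\<lambda>x. u x * v x) x = partial_deriv b u x * v x + u x * partial_deriv b v x"
  using has_derivative_mult[OF assms[THEN has_derivative_partial_deriv]]
  by (subst partial_deriv_eq) (auto simp: algebra_simps)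

lemma Ck_add: "Ck k u \<Longrightarrow> Ck k v \<Longrightarrow> Ck k (\<lambda>x. u x + v x)"
proof (induction k arbitrary: u v)
  case 0
  then show ?case by (auto intro: continuous_on_add)
next
  case (Suc k)
  then have "partial_deriv b (\<lambda>x. u x + v x) = (\<lambda>x. partial_deriv b u x + partial_deriv b v x)" for b
    by (simp add: Ck_Suc_iff partial_deriv_add fun_eq_iff)
  with Suc show ?case by (simp add: Ck_Suc_iff)
qed

lemma smooth_classI:
  fixes C :: "('a::euclidean_space \<Rightarrow> real) set"
  assumes diff: "\<And>w x. w \<in> C \<Longrightarrow> w differentiable (at x)"
    and partial: "\<And>k w b. (\<And>w. w \<in> C \<Longrightarrow> Ck k w) \<Longrightarrow> w \<in> C \<Longrightarrow> b \<in> Basis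
                   \<Longrightarrow> Ck k (partial_deriv b w)"
    and "w \<in> C"
  shows "smooth w"
proof -
  have "\<forall>w\<in>C. Ck k w" for k
  proof (induction k)
    case 0
    then show ?case
      using diff by (auto intro!: differentiable_imp_continuous_on simp: differentiable_on_def)
  next
    case (Suc k)
    then show ?case using diff partial by (simp add: Ck_Suc_iff)
  qed
  then show ?thesis using \<open>w \<in> C\<close> by (simp add: smooth_def)
qed

lemma smooth_differentiable: "smooth w \<Longrightarrow> w differentiable (at x)"
  unfolding smooth_def by (metis Ck_Suc_iff)

lemma smooth_partial_deriv: "smooth w \<Longrightarrow> b \<in> Basis \<Longrightarrow> smooth (partial_deriv b w)"
  unfolding smooth_def by (metis Ck_Suc_iff)

lemma smooth_isCont: "smooth w \<Longrightarrow> isCont w x"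
  by (simp add: smooth_differentiable differentiable_imp_continuous_within continuous_at_imp_continuous_at_within)

lemma smooth_continuous_on: "smooth w \<Longrightarrow> continuous_on S w"
  by (simp add: smooth_isCont continuous_at_imp_continuous_on)

lemma smooth_has_derivative: "smooth w \<Longrightarrow> (w has_derivative (\<lambda>b. partial_deriv b w x)) (at x)"
  by (simp add: smooth_differentiable has_derivative_partial_deriv)

lemma smooth_const: "smooth (\<lambda>x::'a::euclidean_space. c)"
proof (rule smooth_classI[where C = "range (\<lambda>c (x::'a). c)"])
  fix k and w :: "'a \<Rightarrow> real" and b :: 'a
  assume "\<And>w. w \<in> range (\<lambda>c (x::'a). c) \<Longrightarrow> Ck k w" and "w \<in> range (\<lambda>c (x::'a). c)"
  moreover from this have "partial_deriv b w = (\<lambda>x. 0)"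
    by (auto intro!: partial_deriv_eq)
  ultimately show "Ck k (partial_deriv b w)" by auto
qed auto

lemma smooth_mult:
  fixes u v :: "'a::euclidean_space \<Rightarrow> real"
  assumes "smooth u" "smooth v"
  shows "smooth (\<lambda>x. u x * v x)"
proof -
  define C :: "('a \<Rightarrow> real) set" where "C = {\<lambda>x. u x * v x | u v. smooth u \<and> smooth v}"
  show ?thesis
  proof (rule smooth_classI[of C])
    fix k w and b :: 'a
    assume IH: "\<And>w. w \<in> C \<Longrightarrow> Ck k w" and "w \<in> C" and b: "b \<in> Basis"
    then obtain u v where uv: "smooth u" "smooth v" and w: "w = (\<lambda>x. u x * v x)"
      unfolding C_def by blast
    have "partial_deriv b w = (\<lambda>x. partial_deriv b u x * v x + u x * partial_deriv b v x)"
      using uv by (simp add: w fun_eq_iff partial_deriv_mult smooth_differentiable)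
    moreover have "Ck k (\<lambda>x. u' x * v' x)" if "smooth u'" "smooth v'" for u' v' :: "'a \<Rightarrow> real"
      using that by (intro IH) (auto simp: C_def)
    ultimately show "Ck k (partial_deriv b w)"
      using uv b by (simp add: Ck_add smooth_partial_deriv)
  qed (use assms in \<open>auto simp: C_def smooth_differentiable\<close>)
qed

lemma smooth_compose_linear:
  fixes L :: "'a::euclidean_space \<Rightarrow> 'b::euclidean_space"
  assumes L: "linear L" "\<And>b. b \<in> Basis \<Longrightarrow> L b \<in> Basis \<or> L b = 0" and "smooth w"
  shows "smooth (\<lambda>x. w (L x))"
proof -
  define C :: "('a \<Rightarrow> real) set" where "C = {\<lambda>x. w (L x) | w. smooth w}"
  have chain: "((\<lambda>x. w (L x)) has_derivative (\<lambda>b. partial_deriv (L b) w (L x))) (at x)"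
    if "smooth w" for w x
    using has_derivative_compose[OF linear_imp_has_derivative[OF L(1)] smooth_has_derivative[OF that]]
    by simp
  show ?thesis
  proof (rule smooth_classI[of C])
    show "w differentiable (at x)" if "w \<in> C" for w x
      using that chain by (auto simp: C_def intro: differentiableI)
  next
    fix k w and b :: 'a
    assume IH: "\<And>w. w \<in> C \<Longrightarrow> Ck k w" and "w \<in> C" and b: "b \<in> Basis"
    then obtain v where v: "smooth v" and w: "w = (\<lambda>x. v (L x))" unfolding C_def by blast
    have "partial_deriv b w = (\<lambda>x. partial_deriv (L b) v (L x))"
      using partial_deriv_eq[OF chain[OF v]] by (simp add: w fun_eq_iff)
    moreover have "smooth (partial_deriv (L b) v)"
    proof (cases "L b = 0")
      case True
      then have "partial_deriv (L b) v = (\<lambda>x. 0)"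
        using v by (simp add: fun_eq_iff partial_deriv_zero smooth_differentiable)
      then show ?thesis using smooth_const by simp
    qed (use L(2)[OF b] v in \<open>auto intro: smooth_partial_deriv\<close>)
    ultimately show "Ck k (partial_deriv b w)" unfolding C_def by (auto intro!: IH[unfolded C_def])
  qed (use assms in \<open>auto simp: C_def\<close>)
qed

lemma smooth_compose_fst:
  fixes w :: "'a::euclidean_space \<Rightarrow> real"
  assumes "smooth w"
  shows "smooth (\<lambda>z::'a \<times> 'b::euclidean_space. w (fst z))"
  by (rule smooth_compose_linear[OF linear_fst _ assms]) (auto simp: Basis_prod_def)

lemma smooth_compose_Pair_zero:
  fixes w :: "'a::euclidean_space \<times> 'b::euclidean_space \<Rightarrow> real"
  assumes "smooth w"
  shows "smooth (\<lambda>x. w (x, 0))"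
  by (rule smooth_compose_linear[OF bounded_linear.linear[OF
        bounded_linear_Pair[OF bounded_linear_ident bounded_linear_zero]] _ assms])
     (auto simp: Basis_prod_def)

lemma smooth_compose_real:
  fixes F :: "nat \<Rightarrow> real \<Rightarrow> real" and v :: "'a::euclidean_space \<Rightarrow> real"
  assumes F: "\<And>j s. (F j has_real_derivative F (Suc j) s) (at s)" and v: "smooth v"
  shows "smooth (\<lambda>x. F 0 (v x))"
proof -
  define C :: "('a \<Rightarrow> real) set" where "C = {\<lambda>x. F j (v x) * P x | j P. smooth P}"
  have chain: "((\<lambda>x. F j (v x)) has_derivative (\<lambda>b. F (Suc j) (v x) * partial_deriv b v x)) (at x)"
    for j x
    using has_derivative_compose[OF smooth_has_derivative[OF v] F[unfolded has_field_derivative_def]]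
    by simp
  show ?thesis
  proof (rule smooth_classI[of C])
    show "w differentiable (at x)" if "w \<in> C" for w x
      using that differentiableI[OF chain] by (auto simp: C_def smooth_differentiable)
  next
    fix k w and b :: 'a
    assume IH: "\<And>w. w \<in> C \<Longrightarrow> Ck k w" and "w \<in> C" and b: "b \<in> Basis"
    then obtain j P where P: "smooth P" and w: "w = (\<lambda>x. F j (v x) * P x)" unfolding C_def by blast
    have "partial_deriv b w =
        (\<lambda>x. F (Suc j) (v x) * (partial_deriv b v x * P x) + F j (v x) * partial_deriv b P x)"
      using partial_deriv_mult[OF differentiableI[OF chain] smooth_differentiable[OF P]]
        partial_deriv_eq[OF chain]
      by (simp add: w fun_eq_iff)
    moreover have "Ck k (\<lambda>x. F i (v x) * Q x)" if "smooth Q" for i and Q :: "'a \<Rightarrow> real"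
      using that by (intro IH) (auto simp: C_def)
    ultimately show "Ck k (partial_deriv b w)"
      using v P b by (simp add: Ck_add smooth_mult smooth_partial_deriv)
  next
    show "(\<lambda>x. F 0 (v x)) \<in> C"
      unfolding C_def using smooth_const[of 1] by force
  qed
qed

lemma has_derivative_zero_if_flat:
  fixes w :: "'a::real_normed_vector \<Rightarrow> real"
  assumes "w x = 0" and flat: "\<And>\<epsilon>. 0 < \<epsilon> \<Longrightarrow> eventually (\<lambda>y. \<bar>w y\<bar> \<le> \<epsilon> * norm (y - x)) (at x)"
  shows "(w has_derivative (\<lambda>_. 0)) (at x)"
  unfolding has_derivative_iff_norm
proof (intro conjI tendstoI)
  fix \<epsilon> :: real
  assume "0 < \<epsilon>"
  have "eventually (\<lambda>y. y \<noteq> x) (at x)" by (simp add: eventually_at_filter)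
  moreover have "eventually (\<lambda>y. \<bar>w y\<bar> \<le> \<epsilon> / 2 * norm (y - x)) (at x)"
    using \<open>0 < \<epsilon>\<close> by (intro flat) simp
  ultimately show "eventually (\<lambda>y. dist (norm (w y - w x - 0) / norm (y - x)) 0 < \<epsilon>) (at x)"
  proof eventually_elim
    case (elim y)
    then have "0 < \<epsilon> * norm (y - x)" using \<open>0 < \<epsilon>\<close> by simp
    with elim show ?case using \<open>w x = 0\<close> by (simp add: divide_less_eq)
  qed
qed simp

section \<open>Functions flat at 0 at a prescribed rate\<close>

fun exp_flat_poly :: "nat \<Rightarrow> real poly" where
  "exp_flat_poly 0 = 1"
| "exp_flat_poly (Suc j) = [:0, 0, 1:] * (exp_flat_poly j - pderiv (exp_flat_poly j))"

definition exp_flat :: "nat \<Rightarrow> real \<Rightarrow> real" where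
  "exp_flat j s = (if s \<le> 0 then 0 else poly (exp_flat_poly j) (inverse s) * exp (- inverse s))"

lemma exp_flat_nonpos [simp]: "s \<le> 0 \<Longrightarrow> exp_flat j s = 0"
  by (simp add: exp_flat_def)

lemma exp_flat_0_pos: "0 < s \<Longrightarrow> 0 < exp_flat 0 s"
  by (simp add: exp_flat_def)

lemma exp_flat_0_nonneg: "0 \<le> exp_flat 0 s"
  by (simp add: exp_flat_def)

lemma exp_flat_eq_poly_div_exp:
  "0 < s \<Longrightarrow> exp_flat j s = poly (exp_flat_poly j) (inverse s) / exp (inverse s)"
  by (simp add: exp_flat_def exp_minus divide_inverse)

lemma poly_div_exp_tendsto_0: "((\<lambda>u. poly p u / exp u) \<longlongrightarrow> (0::real)) at_top"
proof -
  have "((\<lambda>u. \<Sum>i\<le>degree p. coeff p i * (u ^ i / exp u)) \<longlongrightarrow> (\<Sum>i\<le>degree p. coeff p i * 0)) at_top"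
    using tendsto_power_div_exp_0 by (intro tendsto_sum tendsto_mult tendsto_const) auto
  then show ?thesis by (simp add: poly_altdef sum_divide_distrib)
qed

lemma poly_div_exp_bounded: "\<exists>B. \<forall>u\<ge>0. \<bar>poly p u / exp u\<bar> \<le> (B::real)"
proof -
  obtain U where U: "\<And>u. u \<ge> U \<Longrightarrow> \<bar>poly p u / exp u\<bar> < 1"
    using tendstoD[OF poly_div_exp_tendsto_0 zero_less_one, of p]
    unfolding eventually_at_top_linorder by auto
  have "compact ((\<lambda>u. poly p u / exp u) ` {0..U})"
    by (intro compact_continuous_image continuous_intros) auto
  from compact_imp_bounded[OF this] obtain C
    where "\<forall>x \<in> (\<lambda>u. poly p u / exp u) ` {0..U}. norm x \<le> C"
    unfolding bounded_iff by blast
  then have C: "\<bar>poly p u / exp u\<bar> \<le> C" if "u \<in> {0..U}" for u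
    using that by (metis image_eqI real_norm_def)
  have "\<bar>poly p u / exp u\<bar> \<le> max 1 C" if "u \<ge> 0" for u
    unfolding le_max_iff_disj using U[of u] C[of u] that by (cases "u \<ge> U") auto
  then show ?thesis by blast
qed

lemma exp_flat_bounded: obtains B where "\<And>j s. \<bar>exp_flat j s\<bar> \<le> B j"
proof -
  have "\<exists>B. \<forall>s. \<bar>exp_flat j s\<bar> \<le> B" for j
  proof -
    obtain B where B: "\<And>u. u \<ge> 0 \<Longrightarrow> \<bar>poly (exp_flat_poly j) u / exp u\<bar> \<le> B"
      using poly_div_exp_bounded by blast
    have "\<bar>exp_flat j s\<bar> \<le> B" for s
      using B[of 0] B[of "inverse s"] by (cases "s \<le> 0") (auto simp: exp_flat_eq_poly_div_exp)
    then show ?thesis by blast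
  qed
  then show ?thesis using that by metis
qed

lemma exp_flat_div_tendsto_0: "((\<lambda>s. exp_flat j s / s) \<longlongrightarrow> 0) (at 0)"
proof -
  have "((\<lambda>s. poly (pCons 0 (exp_flat_poly j)) (inverse s) / exp (inverse s)) \<longlongrightarrow> 0) (at_right 0)"
    by (rule filterlim_compose[OF poly_div_exp_tendsto_0 filterlim_inverse_at_top_right])
  moreover have "eventually (\<lambda>s. poly (pCons 0 (exp_flat_poly j)) (inverse s) / exp (inverse s)
      = exp_flat j s / s) (at_right 0)"
    unfolding eventually_at_right_field
    by (rule exI[of _ 1]) (auto simp: exp_flat_eq_poly_div_exp divide_inverse)
  ultimately have "((\<lambda>s. exp_flat j s / s) \<longlongrightarrow> 0) (at_right 0)"
    by (rule Lim_transform_eventually)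
  moreover have "eventually (\<lambda>s. 0 = exp_flat j s / s) (at_left 0)"
    unfolding eventually_at_left_field by (rule exI[of _ "-1"]) auto
  then have "((\<lambda>s. exp_flat j s / s) \<longlongrightarrow> 0) (at_left 0)"
    by (rule Lim_transform_eventually[OF tendsto_const])
  ultimately show ?thesis by (simp add: filterlim_at_split)
qed

lemma poly_exp_inverse_has_derivative:
  assumes "s \<noteq> 0"
  shows "((\<lambda>s. poly (exp_flat_poly j) (inverse s) * exp (- inverse s)) has_real_derivative
           poly (exp_flat_poly (Suc j)) (inverse s) * exp (- inverse s)) (at s)"
proof -
  have inv: "(inverse has_real_derivative - (inverse s)\<^sup>2) (at s)"
    using assms by (auto intro!: derivative_eq_intros simp: power2_eq_square)
  have "((\<lambda>s. poly (exp_flat_poly j) (inverse s)) has_real_derivative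
      poly (pderiv (exp_flat_poly j)) (inverse s) * - (inverse s)\<^sup>2) (at s)"
    by (rule DERIV_chain2[OF poly_DERIV inv])
  moreover have "((\<lambda>s. exp (- inverse s)) has_real_derivative exp (- inverse s) * (inverse s)\<^sup>2) (at s)"
    using DERIV_chain2[OF DERIV_exp DERIV_minus[OF inv]] by simp
  ultimately show ?thesis
    by (rule DERIV_cong[OF DERIV_mult]) (simp add: algebra_simps power2_eq_square)
qed

lemma exp_flat_has_derivative: "(exp_flat j has_real_derivative exp_flat (Suc j) s) (at s)"
proof -
  consider "s = 0" | "0 < s" | "s < 0" by linarith
  then show ?thesis
  proof cases
    case 1
    then show ?thesis
      using exp_flat_div_tendsto_0[of j] by (simp add: has_field_derivative_iff)
  next
    case 2
    have "(exp_flat j has_real_derivative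
        poly (exp_flat_poly (Suc j)) (inverse s) * exp (- inverse s)) (at s)"
      by (rule has_field_derivative_transform_within_open[OF poly_exp_inverse_has_derivative,
            where S = "{0<..}"]) (use 2 in \<open>auto simp: exp_flat_def\<close>)
    then show ?thesis using 2 by (simp add: exp_flat_def)
  next
    case 3
    have "(exp_flat j has_real_derivative 0) (at s)"
      by (rule has_field_derivative_transform_within_open[where f = "\<lambda>_. 0" and S = "{..<0}"])
         (use 3 in auto)
    then show ?thesis using 3 by simp
  qed
qed

definition theta :: "(nat \<Rightarrow> real) \<Rightarrow> nat \<Rightarrow> real \<Rightarrow> real" where
  "theta b j s = (\<Sum>M. b M * exp_flat j (s - (1/4)^M))"

lemma theta_0: "theta b j 0 = 0"
  by (simp add: theta_def)

lemma theta_summand_bound: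
  assumes "\<And>M. 0 \<le> b M" "\<And>M. b M \<le> (1/2)^M"
  obtains B where "\<And>M s. \<bar>b M * exp_flat j s\<bar> \<le> B * (1/2)^M"
proof -
  obtain B where B: "\<And>j s. \<bar>exp_flat j s\<bar> \<le> B j" using exp_flat_bounded by blast
  have "b M * \<bar>exp_flat j s\<bar> \<le> (1/2)^M * B j" for M s
    using assms B by (intro mult_mono) auto
  then have "\<bar>b M * exp_flat j s\<bar> \<le> B j * (1/2)^M" for M s
    using assms by (simp add: abs_mult mult.commute)
  then show thesis by (rule that)
qed

lemma summable_theta:
  assumes "\<And>M. 0 \<le> b M" "\<And>M. b M \<le> (1/2)^M"
  shows "summable (\<lambda>M. b M * exp_flat j (s - (1/4)^M))"
proof -
  obtain B where "\<And>M s. \<bar>b M * exp_flat j s\<bar> \<le> B * (1/2)^M"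
    using theta_summand_bound[OF assms] by blast
  then show ?thesis
    by (intro summable_comparison_test'[where N = 0, OF summable_mult[OF summable_geometric]]) auto
qed

lemma theta_has_derivative:
  assumes "\<And>M. 0 \<le> b M" "\<And>M. b M \<le> (1/2)^M"
  shows "(theta b j has_real_derivative theta b (Suc j) s) (at s)"
proof -
  obtain B where "\<And>M s. \<bar>b M * exp_flat (Suc j) s\<bar> \<le> B * (1/2)^M"
    using theta_summand_bound[OF assms] by blast
  then have "uniformly_convergent_on UNIV (\<lambda>n x. \<Sum>M<n. b M * exp_flat (Suc j) (x - (1/4)^M))"
    by (intro Weierstrass_m_test'[where M = "\<lambda>M. B * (1/2)^M"])
       (auto intro!: summable_mult summable_geometric)
  moreover have "((\<lambda>x. b M * exp_flat j (x - (1/4)^M)) has_real_derivative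
      b M * exp_flat (Suc j) (x - (1/4)^M)) (at x within UNIV)" for M x
    using DERIV_cmult[OF DERIV_chain2[OF exp_flat_has_derivative DERIV_diff[OF DERIV_ident DERIV_const]]]
    by simp
  ultimately show ?thesis
    unfolding theta_def using summable_theta[OF assms]
    by (intro has_field_derivative_series'(2)) auto
qed

lemma theta_pos:
  assumes "\<And>M. 0 < b M" "\<And>M. b M \<le> (1/2)^M" and "0 < s"
  shows "0 < theta b 0 s"
proof -
  obtain M where M: "(1/4)^M < s" using real_arch_pow_inv[OF \<open>0 < s\<close>, of "1/4"] by auto
  have "summable (\<lambda>M. b M * exp_flat 0 (s - (1/4)^M))"
    using less_imp_le[OF assms(1)] assms(2) by (rule summable_theta)
  then show ?thesis
    unfolding theta_def
  proof (rule suminf_pos2)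
    show "0 \<le> b n * exp_flat 0 (s - (1/4)^n)" for n
      using less_imp_le[OF assms(1)] exp_flat_0_nonneg by (rule mult_nonneg_nonneg)
    show "0 < b M * exp_flat 0 (s - (1/4)^M)"
      using assms(1) exp_flat_0_pos M by simp
  qed
qed

lemma theta_bound:
  assumes "\<And>M. 0 \<le> b M" and small: "\<And>M s. N < M \<Longrightarrow> b M * \<bar>exp_flat j s\<bar> \<le> (1/2)^M * A"
    and "s \<le> (1/4)^N"
  shows "\<bar>theta b j s\<bar> \<le> 2 * A"
proof -
  have "(1/2)^(Suc N) * 0 \<le> (1/2)^(Suc N) * A" using small[of "Suc N" 0] by simp
  then have "0 \<le> A" by (rule mult_left_le_imp_le) simp
  have summand: "\<bar>b M * exp_flat j (s - (1/4)^M)\<bar> \<le> (1/2)^M * A" for M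
  proof (cases "N < M")
    case True
    then show ?thesis using small assms(1) by (simp add: abs_mult)
  next
    case False
    then have "(1/4::real)^N \<le> (1/4)^M" by (intro power_decreasing) auto
    then have "s - (1/4)^M \<le> 0" using \<open>s \<le> (1/4)^N\<close> by linarith
    then show ?thesis using \<open>0 \<le> A\<close> by simp
  qed
  have geom: "summable (\<lambda>M. (1/2::real)^M * A)" by (intro summable_mult2 summable_geometric) simp
  have abs_summable: "summable (\<lambda>M. \<bar>b M * exp_flat j (s - (1/4)^M)\<bar>)"
    by (rule summable_comparison_test'[OF geom, where N = 0]) (use summand in simp)
  have "\<bar>theta b j s\<bar> \<le> (\<Sum>M. \<bar>b M * exp_flat j (s - (1/4)^M)\<bar>)"
    unfolding theta_def using summable_norm[OF abs_summable[folded real_norm_def]] by simp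
  also have "\<dots> \<le> (\<Sum>M. (1/2::real)^M * A)"
    by (rule suminf_le[OF summand abs_summable geom])
  also have "\<dots> = 2 * A"
    using suminf_mult2[OF summable_geometric[of "1/2::real"]] suminf_geometric[of "1/2::real"]
    by simp
  finally show ?thesis .
qed

lemma theta_weights_exist:
  fixes a B :: "nat \<Rightarrow> real"
  assumes "\<And>N. 0 < a N"
  obtains b where "\<And>M. 0 < b M" "\<And>M. b M \<le> (1/2)^M"
    "\<And>j N M. j \<le> N \<Longrightarrow> N < M \<Longrightarrow> b M * B j \<le> (1/2)^M * a N"
proof
  define C where "C i = (\<Sum>j\<le>i. \<bar>B j\<bar>)" for i
  define e where "e i = min 1 (a i / (1 + C i))" for i
  define b where "b M = (1/2)^M * (\<Prod>i\<le>M. e i)" for M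
  have C: "0 \<le> C i" "j \<le> i \<Longrightarrow> \<bar>B j\<bar> \<le> C i" for i j
    unfolding C_def by (auto intro: sum_nonneg member_le_sum)
  have e: "0 < e i" "e i \<le> 1" for i
    unfolding e_def using assms[of i] C(1)[of i] by auto
  have prod_le: "(\<Prod>i\<le>M. e i) \<le> e N" if "N \<le> M" for N M
  proof -
    have "(\<Prod>i\<le>M. e i) = e N * (\<Prod>i\<in>{..M} - {N}. e i)"
      using that by (subst prod.remove[of _ N]) auto
    also have "\<dots> \<le> e N"
      using e by (intro mult_right_le_one_le prod_le_1 prod_nonneg) (auto intro: less_imp_le)
    finally show ?thesis .
  qed
  show b_pos: "0 < b M" for M unfolding b_def using e by (simp add: prod_pos)
  show "b M \<le> (1/2)^M" for M
    unfolding b_def using e by (auto intro!: mult_left_le prod_le_1 intro: less_imp_le)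
  show "b M * B j \<le> (1/2)^M * a N" if "j \<le> N" "N < M" for j N M
  proof -
    have "e N * C N \<le> a N / (1 + C N) * C N"
      unfolding e_def using C(1) by (intro mult_right_mono) auto
    also have "\<dots> \<le> a N"
      using C(1)[of N] assms[of N] by (simp add: field_simps)
    finally have eC: "e N * C N \<le> a N" .
    have "b M * B j \<le> b M * C N"
      using b_pos[of M] C(2)[OF \<open>j \<le> N\<close>] by (intro mult_left_mono) auto
    also have "\<dots> \<le> (1/2)^M * e N * C N"
      unfolding b_def using prod_le[of N M] that C(1)[of N] by (intro mult_right_mono) auto
    also have "\<dots> \<le> (1/2)^M * a N" using eC by (simp add: mult.assoc)
    finally show ?thesis .
  qed
qed

lemma rapidly_flat_function_exists:
  fixes a :: "nat \<Rightarrow> real"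
  assumes "\<And>N. 0 < a N"
  obtains \<theta> :: "nat \<Rightarrow> real \<Rightarrow> real"
  where "\<And>j s. (\<theta> j has_real_derivative \<theta> (Suc j) s) (at s)"
    and "\<And>s. 0 < s \<Longrightarrow> 0 < \<theta> 0 s" and "\<theta> 0 0 = 0"
    and "\<And>j N s. j \<le> N \<Longrightarrow> s \<le> (1/4)^N \<Longrightarrow> \<bar>\<theta> j s\<bar> \<le> a N"
proof -
  obtain B where B: "\<And>j s. \<bar>exp_flat j s\<bar> \<le> B j" using exp_flat_bounded by blast
  obtain b where b: "\<And>M. 0 < b M" "\<And>M. b M \<le> (1/2)^M"
    and small: "\<And>j N M. j \<le> N \<Longrightarrow> N < M \<Longrightarrow> b M * B j \<le> (1/2)^M * (a N / 2)"
    using theta_weights_exist[of "\<lambda>N. a N / 2" B] assms by auto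
  show thesis
  proof (rule that[of "theta b"])
    show "(theta b j has_real_derivative theta b (Suc j) s) (at s)" for j s
      using less_imp_le[OF b(1)] b(2) by (rule theta_has_derivative)
    show "0 < theta b 0 s" if "0 < s" for s
      using b that by (rule theta_pos)
    show "theta b 0 0 = 0" by (rule theta_0)
    show "\<bar>theta b j s\<bar> \<le> a N" if "j \<le> N" "s \<le> (1/4)^N" for j N s
    proof -
      have "b M * \<bar>exp_flat j s'\<bar> \<le> (1/2)^M * (a N / 2)" if "N < M" for M s'
        using mult_left_mono[OF B[of j s'] less_imp_le[OF b(1)[of M]]] small[OF \<open>j \<le> N\<close> that]
        by linarith
      then show ?thesis using theta_bound[of b N j "a N / 2" s] b(1) \<open>s \<le> (1/4)^N\<close>
        by (simp add: less_imp_le)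
    qed
  qed
qed

section \<open>Flattened quotients\<close>

lemma differentiable_vanishing_linear_bound:
  fixes k :: "'a::real_normed_vector \<Rightarrow> real"
  assumes "k differentiable (at p)" "k p = 0"
  obtains L where "0 < L" "eventually (\<lambda>q. \<bar>k q\<bar> \<le> L * norm (q - p)) (at p)"
proof -
  obtain D where D: "(k has_derivative D) (at p)" using assms(1) unfolding differentiable_def by blast
  obtain K where K: "0 < K" "\<And>x. norm (D x) \<le> norm x * K"
    using bounded_linear.pos_bounded[OF has_derivative_bounded_linear[OF D]] by blast
  have "eventually (\<lambda>q. norm (k q - k p - D (q - p)) / norm (q - p) < 1) (at p)"
    using tendstoD[OF D[unfolded has_derivative_iff_norm, THEN conjunct2] zero_less_one] by simp
  moreover have "eventually (\<lambda>q. q \<noteq> p) (at p)" by (simp add: eventually_at_filter)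
  ultimately have "eventually (\<lambda>q. \<bar>k q\<bar> \<le> (K + 1) * norm (q - p)) (at p)"
  proof eventually_elim
    case (elim q)
    then have "\<bar>k q - D (q - p)\<bar> < norm (q - p)"
      using \<open>k p = 0\<close> by (simp add: divide_less_eq)
    moreover have "\<bar>D (q - p)\<bar> \<le> norm (q - p) * K" using K(2)[of "q - p"] by simp
    ultimately show ?case by (simp add: algebra_simps)
  qed
  then show thesis using K(1) by (intro that[of "K + 1"]) auto
qed

lemma quarter_power_bracket:
  fixes s :: real
  assumes "0 < s" "s \<le> (1/4)^N"
  obtains M where "N \<le> M" "(1/4)^Suc M < s" "s \<le> (1/4)^M"
proof -
  obtain n where "(1/4)^n < s" using real_arch_pow_inv[OF assms(1), of "1/4"] by auto
  moreover have "(1/4::real)^(N + n) \<le> (1/4)^n" by (intro power_decreasing) auto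
  ultimately have "\<exists>i. (1/4)^(N + i) < s" by (metis le_less_trans)
  from exists_least_lemma[of "\<lambda>i. (1/4)^(N + i) < s", OF _ this] assms(2)
  obtain i where "\<not> (1/4)^(N + i) < s" "(1/4)^(N + Suc i) < s" by auto
  then show thesis by (intro that[of "N + i"]) auto
qed

lemma quarter_power_lt:
  fixes t :: real
  assumes "(1/4)^Suc M < t\<^sup>2"
  shows "(1/4)^M < 2 * (1/2)^M * \<bar>t\<bar>"
proof -
  have "((1/2::real)^n)\<^sup>2 = (1/4)^n" for n
    by (simp add: power2_eq_square power_mult_distrib[symmetric])
  then have "((1/2)^Suc M)\<^sup>2 < \<bar>t\<bar>\<^sup>2"
    using assms by (simp only: power2_abs)
  then have "(1/2)^Suc M < \<bar>t\<bar>" by (rule power_less_imp_less_base) simp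
  then have "2 * (1/2)^M * (1/2)^Suc M < 2 * (1/2)^M * \<bar>t\<bar>" by simp
  then show ?thesis by (simp add: power_mult_distrib[symmetric])
qed

lemma compact_nonzero_bounded_below:
  fixes f :: "'a::topological_space \<Rightarrow> real"
  assumes "compact S" "continuous_on S f" "\<And>x. x \<in> S \<Longrightarrow> f x \<noteq> 0"
  obtains c where "0 < c" "c \<le> 1" "\<And>x. x \<in> S \<Longrightarrow> c \<le> \<bar>f x\<bar>"
proof (cases "S = {}")
  case False
  obtain x0 where "x0 \<in> S" "\<And>x. x \<in> S \<Longrightarrow> \<bar>f x0\<bar> \<le> \<bar>f x\<bar>"
    using continuous_attains_inf[OF assms(1) False continuous_on_rabs[OF assms(2)]] by blast
  then show thesis using assms(3) by (intro that[of "min 1 \<bar>f x0\<bar>"]) force+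
qed (use that[of 1] in auto)

locale flattening =
  fixes f k :: "'a::euclidean_space \<Rightarrow> real" and \<theta> :: "nat \<Rightarrow> real \<Rightarrow> real"
  assumes smooth_f: "smooth f" and smooth_k: "smooth k"
    and f_nonzero: "\<And>q. k q \<noteq> 0 \<Longrightarrow> f q \<noteq> 0"
    and \<theta>_deriv: "\<And>j s. (\<theta> j has_real_derivative \<theta> (Suc j) s) (at s)"
    and \<theta>_decay: "\<And>j m M q. j \<le> M \<Longrightarrow> m \<le> M \<Longrightarrow> norm q \<le> Suc M \<Longrightarrow> (1/4)^Suc M < (k q)\<^sup>2
      \<Longrightarrow> (k q)\<^sup>2 \<le> (1/4)^M \<Longrightarrow> \<bar>\<theta> j ((k q)\<^sup>2)\<bar> \<le> (1/4)^M * \<bar>f q\<bar>^m"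
begin

definition flat_quotient :: "nat \<Rightarrow> ('a \<Rightarrow> real) \<Rightarrow> nat \<Rightarrow> 'a \<Rightarrow> real" where
  "flat_quotient j P m q = (if k q = 0 then 0 else \<theta> j ((k q)\<^sup>2) * P q * inverse (f q) ^ m)"

lemma flat_quotient_shell_bound:
  assumes "j \<le> M" "m \<le> M" "norm q \<le> Suc M" "(1/4)^Suc M < (k q)\<^sup>2" "(k q)\<^sup>2 \<le> (1/4)^M"
  shows "\<bar>flat_quotient j P m q\<bar> \<le> (1/4)^M * \<bar>P q\<bar>"
proof -
  have "0 < (k q)\<^sup>2" using assms(4) zero_less_power[of "1/4::real" "Suc M"] by linarith
  then have "k q \<noteq> 0" by auto
  then have "f q \<noteq> 0" by (rule f_nonzero)
  have "\<bar>flat_quotient j P m q\<bar> = \<bar>\<theta> j ((k q)\<^sup>2)\<bar> * \<bar>P q\<bar> / \<bar>f q\<bar> ^ m"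
    using \<open>k q \<noteq> 0\<close>
    by (simp add: flat_quotient_def abs_mult power_inverse divide_inverse power_abs)
  also have "\<dots> \<le> (1/4)^M * \<bar>f q\<bar>^m * \<bar>P q\<bar> / \<bar>f q\<bar> ^ m"
    using \<theta>_decay[OF assms] by (intro divide_right_mono mult_right_mono) auto
  also have "\<dots> = (1/4)^M * \<bar>P q\<bar>" using \<open>f q \<noteq> 0\<close> by simp
  finally show ?thesis .
qed

lemma flat_quotient_scale_bound:
  assumes "(k q)\<^sup>2 \<le> (1/4)^N" "j \<le> N" "m \<le> N" "norm q \<le> N"
  shows "\<bar>flat_quotient j P m q\<bar> \<le> 2 * (1/2)^N * \<bar>k q\<bar> * \<bar>P q\<bar>"
proof (cases "k q = 0")
  case False
  then obtain M where M: "N \<le> M" "(1/4)^Suc M < (k q)\<^sup>2" "(k q)\<^sup>2 \<le> (1/4)^M"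
    using quarter_power_bracket[of "(k q)\<^sup>2" N] assms(1) by auto
  have "j \<le> M" "m \<le> M" "norm q \<le> Suc M" using assms M(1) by linarith+
  then have "\<bar>flat_quotient j P m q\<bar> \<le> (1/4)^M * \<bar>P q\<bar>"
    using M(2,3) by (rule flat_quotient_shell_bound)
  also have "\<dots> \<le> 2 * (1/2)^M * \<bar>k q\<bar> * \<bar>P q\<bar>"
    using quarter_power_lt[OF M(2)] by (simp add: mult_right_mono)
  also have "\<dots> \<le> 2 * (1/2)^N * \<bar>k q\<bar> * \<bar>P q\<bar>"
    using M(1) by (intro mult_right_mono power_decreasing) auto
  finally show ?thesis .
qed (simp add: flat_quotient_def)

lemma flat_quotient_flat:
  assumes "isCont P p" "k p = 0" "0 < \<epsilon>"
  shows "eventually (\<lambda>q. \<bar>flat_quotient j P m q\<bar> \<le> \<epsilon> * norm (q - p)) (at p)"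
proof -
  obtain L where "0 < L" and k_lin: "eventually (\<lambda>q. \<bar>k q\<bar> \<le> L * norm (q - p)) (at p)"
    using differentiable_vanishing_linear_bound[OF smooth_differentiable[OF smooth_k] assms(2)] .
  define B where "B = \<bar>P p\<bar> + 1"
  have "0 < B" by (simp add: B_def)
  have P_bound: "eventually (\<lambda>q. \<bar>P q\<bar> \<le> B) (at p)"
    using tendstoD[OF assms(1)[unfolded isCont_def] zero_less_one]
    by eventually_elim (auto simp: B_def dist_real_def)
  obtain n where n: "(1/2)^n < \<epsilon> / (2 * B * L)"
    using real_arch_pow_inv[of "\<epsilon> / (2 * B * L)" "1/2"] \<open>0 < B\<close> \<open>0 < L\<close> assms(3) by auto
  define N where "N = max (max n (max j m)) (nat \<lceil>norm p + 1\<rceil>)"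
  have near: "eventually (\<lambda>q. norm q \<le> norm p + 1) (at p)"
    using tendstoD[OF tendsto_ident_at zero_less_one, of p UNIV]
  proof eventually_elim
    case (elim q)
    then show ?case using norm_triangle_ineq2[of q p] by (simp add: dist_norm)
  qed
  have "(k \<longlongrightarrow> 0) (at p)" using smooth_isCont[OF smooth_k, of p] assms(2) by (simp add: isCont_def)
  then have "eventually (\<lambda>q. dist ((k q)\<^sup>2) 0 < (1/4)^N) (at p)"
    using tendsto_power[of k 0 _ 2] by (intro tendstoD) simp_all
  then have small: "eventually (\<lambda>q. (k q)\<^sup>2 \<le> (1/4)^N) (at p)"
    by eventually_elim (simp add: dist_real_def)
  show ?thesis using k_lin P_bound near small
  proof eventually_elim
    case (elim q)
    have "norm q \<le> N" using elim(3) unfolding N_def by linarith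
    then have "\<bar>flat_quotient j P m q\<bar> \<le> 2 * (1/2)^N * \<bar>k q\<bar> * \<bar>P q\<bar>"
      using flat_quotient_scale_bound[OF elim(4)] by (simp add: N_def)
    also have "\<dots> \<le> 2 * (1/2)^n * (L * norm (q - p)) * B"
      using elim(1,2) by (intro mult_mono power_decreasing) (auto simp: N_def)
    also have "\<dots> = (2 * B * L * (1/2)^n) * norm (q - p)" by simp
    also have "\<dots> \<le> \<epsilon> * norm (q - p)"
      using n \<open>0 < B\<close> \<open>0 < L\<close> by (intro mult_right_mono) (simp_all add: field_simps)
    finally show ?case .
  qed
qed

lemma flat_quotient_has_derivative:
  assumes "smooth P"
  shows "(flat_quotient j P m has_derivative (\<lambda>b.
      flat_quotient (Suc j) (\<lambda>x. 2 * k x * partial_deriv b k x * P x) m q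
    + flat_quotient j (partial_deriv b P) m q
    + flat_quotient j (\<lambda>x. - real m * partial_deriv b f x * P x) (Suc m) q)) (at q)"
proof (cases "k q = 0")
  case True
  have "(flat_quotient j P m has_derivative (\<lambda>_. 0)) (at q)"
    using True smooth_isCont[OF assms]
    by (intro has_derivative_zero_if_flat flat_quotient_flat) (simp_all add: flat_quotient_def)
  then show ?thesis using True by (simp add: flat_quotient_def)
next
  case False
  then have "f q \<noteq> 0" by (rule f_nonzero)
  have d\<theta>: "((\<lambda>x. \<theta> j ((k x)\<^sup>2)) has_derivative
      (\<lambda>b. \<theta> (Suc j) ((k q)\<^sup>2) * (2 * k q * partial_deriv b k q))) (at q)"
    by (rule has_derivative_eq_rhs[OF has_derivative_compose[OF
          has_derivative_power[OF smooth_has_derivative[OF smooth_k]]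
          \<theta>_deriv[unfolded has_field_derivative_def]]])
       (simp add: fun_eq_iff algebra_simps)
  have dinv: "((\<lambda>x. inverse (f x) ^ m) has_derivative
      (\<lambda>b. - (real m * partial_deriv b f q) * inverse (f q) ^ Suc m)) (at q)"
    by (rule has_derivative_eq_rhs[OF has_derivative_power[OF
          Deriv.has_derivative_inverse[OF \<open>f q \<noteq> 0\<close> smooth_has_derivative[OF smooth_f]]]])
       (cases m; simp add: fun_eq_iff algebra_simps)
  have "((\<lambda>x. \<theta> j ((k x)\<^sup>2) * P x * inverse (f x) ^ m) has_derivative (\<lambda>b.
      flat_quotient (Suc j) (\<lambda>x. 2 * k x * partial_deriv b k x * P x) m q
    + flat_quotient j (partial_deriv b P) m q
    + flat_quotient j (\<lambda>x. - real m * partial_deriv b f x * P x) (Suc m) q)) (at q)"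
    by (rule has_derivative_eq_rhs[OF has_derivative_mult[OF
          has_derivative_mult[OF d\<theta> smooth_has_derivative[OF assms]] dinv]])
       (use False in \<open>simp add: fun_eq_iff flat_quotient_def algebra_simps\<close>)
  moreover have "open {x. k x \<noteq> 0}"
    using smooth_isCont[OF smooth_k] by (intro open_Collect_neq) (auto intro: continuous_at_imp_continuous_on)
  ultimately show ?thesis
    by (rule has_derivative_transform_within_open) (use False in \<open>auto simp: flat_quotient_def\<close>)
qed

lemma smooth_flat_quotient:
  assumes "smooth P"
  shows "smooth (flat_quotient j P m)"
proof -
  define C where "C = {flat_quotient j P m | j P m. smooth P}"
  show ?thesis
  proof (rule smooth_classI[of C])
    show "w differentiable (at q)" if "w \<in> C" for w q
      using that by (auto simp: C_def intro: differentiableI[OF flat_quotient_has_derivative])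
  next
    fix n w and b :: 'a
    assume IH: "\<And>w. w \<in> C \<Longrightarrow> Ck n w" and "w \<in> C" and b: "b \<in> Basis"
    then obtain j P m where P: "smooth P" and w: "w = flat_quotient j P m" unfolding C_def by blast
    have "partial_deriv b w = (\<lambda>q.
        flat_quotient (Suc j) (\<lambda>x. 2 * k x * partial_deriv b k x * P x) m q
      + flat_quotient j (partial_deriv b P) m q
      + flat_quotient j (\<lambda>x. - real m * partial_deriv b f x * P x) (Suc m) q)"
      using partial_deriv_eq[OF flat_quotient_has_derivative[OF P]] by (simp add: w fun_eq_iff)
    moreover have "smooth (\<lambda>x. 2 * k x * partial_deriv b k x * P x)"
      "smooth (\<lambda>x. - real m * partial_deriv b f x * P x)"
      by (intro smooth_mult smooth_const smooth_partial_deriv smooth_k smooth_f P b)+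
    moreover have "Ck n (flat_quotient i Q l)" if "smooth Q" for i Q l
      using that by (intro IH) (auto simp: C_def)
    ultimately show "Ck n (partial_deriv b w)"
      using P b by (simp add: Ck_add smooth_partial_deriv)
  qed (use assms in \<open>auto simp: C_def\<close>)
qed

end

lemma shell_lower_bounds:
  fixes f k :: "'a::euclidean_space \<Rightarrow> real"
  assumes "continuous_on UNIV f" "continuous_on UNIV k" "\<And>q. k q \<noteq> 0 \<Longrightarrow> f q \<noteq> 0"
  obtains c where "\<And>N. 0 < c N" "\<And>N. c N \<le> 1"
    "\<And>N q. norm q \<le> real N \<Longrightarrow> (1/4)^N \<le> (k q)\<^sup>2 \<Longrightarrow> c N \<le> \<bar>f q\<bar>"
proof -
  define S where "S N = cball 0 (real N) \<inter> {q. (1/4)^N \<le> (k q)\<^sup>2}" for N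
  have "\<exists>c. 0 < c \<and> c \<le> 1 \<and> (\<forall>q \<in> S N. c \<le> \<bar>f q\<bar>)" for N
  proof -
    have "compact (S N)"
      unfolding S_def using assms(2)
      by (intro compact_Int_closed compact_cball closed_Collect_le continuous_intros)
    moreover have "f q \<noteq> 0" if "q \<in> S N" for q
    proof (rule assms(3))
      have "(0::real) < (1/4)^N" by simp
      moreover have "(1/4)^N \<le> (k q)\<^sup>2" using that by (simp add: S_def)
      ultimately have "0 < (k q)\<^sup>2" by linarith
      then show "k q \<noteq> 0" by auto
    qed
    ultimately obtain c where "0 < c" "c \<le> 1" "\<And>q. q \<in> S N \<Longrightarrow> c \<le> \<bar>f q\<bar>"
      using compact_nonzero_bounded_below continuous_on_subset[OF assms(1) subset_UNIV] by metis
    then show ?thesis by blast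
  qed
  then obtain c where "\<forall>N. 0 < c N \<and> c N \<le> 1 \<and> (\<forall>q \<in> S N. c N \<le> \<bar>f q\<bar>)"
    by metis
  then show thesis by (intro that[of c]) (auto simp: S_def)
qed

lemma smooth_flattened_quotient_exists:
  fixes f k :: "'a::euclidean_space \<Rightarrow> real"
  assumes "smooth f" "smooth k" "\<And>q. k q \<noteq> 0 \<Longrightarrow> f q \<noteq> 0"
  obtains \<theta> :: "nat \<Rightarrow> real \<Rightarrow> real"
  where "\<And>j s. (\<theta> j has_real_derivative \<theta> (Suc j) s) (at s)"
    and "\<And>s. 0 < s \<Longrightarrow> 0 < \<theta> 0 s" and "\<theta> 0 0 = 0"
    and "smooth (\<lambda>q. if k q = 0 then 0 else \<theta> 0 ((k q)\<^sup>2) / f q)"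
proof -
  obtain c where c: "\<And>N. 0 < c N" "\<And>N. c N \<le> 1"
    "\<And>N q. norm q \<le> real N \<Longrightarrow> (1/4)^N \<le> (k q)\<^sup>2 \<Longrightarrow> c N \<le> \<bar>f q\<bar>"
    using shell_lower_bounds[OF smooth_continuous_on smooth_continuous_on] assms by metis
  obtain \<theta> where \<theta>: "\<And>j s. (\<theta> j has_real_derivative \<theta> (Suc j) s) (at s)"
    "\<And>s. 0 < s \<Longrightarrow> 0 < \<theta> 0 s" "\<theta> 0 0 = 0"
    "\<And>j N s. j \<le> N \<Longrightarrow> s \<le> (1/4)^N \<Longrightarrow> \<bar>\<theta> j s\<bar> \<le> (1/4)^N * c (Suc N) ^ N"
    using rapidly_flat_function_exists[of "\<lambda>N. (1/4)^N * c (Suc N) ^ N"] c(1) by auto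
  interpret flattening f k \<theta>
  proof
    fix j m M and q :: 'a
    assume "j \<le> M" "m \<le> M" "norm q \<le> Suc M" "(1/4)^Suc M < (k q)\<^sup>2" "(k q)\<^sup>2 \<le> (1/4)^M"
    then have "c (Suc M) \<le> \<bar>f q\<bar>" by (intro c(3)) auto
    have "\<bar>\<theta> j ((k q)\<^sup>2)\<bar> \<le> (1/4)^M * c (Suc M) ^ M"
      using \<theta>(4) \<open>j \<le> M\<close> \<open>(k q)\<^sup>2 \<le> (1/4)^M\<close> .
    also have "\<dots> \<le> (1/4)^M * c (Suc M) ^ m"
      using c(1,2) \<open>m \<le> M\<close> by (intro mult_left_mono power_decreasing) (auto intro: less_imp_le)
    also have "\<dots> \<le> (1/4)^M * \<bar>f q\<bar> ^ m"
      using c(1) \<open>c (Suc M) \<le> \<bar>f q\<bar>\<close> by (intro mult_left_mono power_mono) (auto intro: less_imp_le)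
    finally show "\<bar>\<theta> j ((k q)\<^sup>2)\<bar> \<le> (1/4)^M * \<bar>f q\<bar> ^ m" .
  qed (use assms \<theta> in auto)
  have "flat_quotient 0 (\<lambda>_. 1) 1 = (\<lambda>q. if k q = 0 then 0 else \<theta> 0 ((k q)\<^sup>2) / f q)"
    by (simp add: fun_eq_iff flat_quotient_def divide_inverse)
  then show thesis
    using that[OF \<theta>(1-3)] smooth_flat_quotient[OF smooth_const] by metis
qed

theorem lemma2p9:
  fixes V :: "(real^'m) set" and f :: "(real^'m) \<times> (real^'n) \<Rightarrow> real"
  assumes "closed V" and "smooth f" and "f -` {0} = fst -` V"
  shows "\<exists>(g :: (real^'m) \<times> (real^'n) \<Rightarrow> real) (h :: real^'m \<Rightarrow> real).
           smooth g \<and> smooth h \<and> h \<circ> fst = (\<lambda>z. f z * g z) \<and> g -` {0} = fst -` V"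
proof -
  define k where "k z = f (fst z, 0)" for z :: "(real^'m) \<times> (real^'n)"
  have smooth_f0: "smooth (\<lambda>x. f (x, 0))" using \<open>smooth f\<close> by (rule smooth_compose_Pair_zero)
  then have "smooth k" unfolding k_def by (rule smooth_compose_fst)
  have f_zero: "f z = 0 \<longleftrightarrow> fst z \<in> V" for z using assms(3)[THEN eqset_imp_iff, of z] by simp
  then have k_zero: "k z = 0 \<longleftrightarrow> fst z \<in> V" for z by (simp add: k_def)
  obtain \<theta> where \<theta>: "\<And>j s. (\<theta> j has_real_derivative \<theta> (Suc j) s) (at s)"
    "\<And>s. 0 < s \<Longrightarrow> 0 < \<theta> 0 s" "\<theta> 0 0 = 0"
    and smooth_g: "smooth (\<lambda>z. if k z = 0 then 0 else \<theta> 0 ((k z)\<^sup>2) / f z)"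
    using smooth_flattened_quotient_exists[OF \<open>smooth f\<close> \<open>smooth k\<close>] f_zero k_zero by blast
  define g where "g z = (if k z = 0 then 0 else \<theta> 0 ((k z)\<^sup>2) / f z)" for z
  define h where "h x = \<theta> 0 ((f (x, 0))\<^sup>2)" for x
  have "smooth h"
    unfolding h_def power2_eq_square
    by (rule smooth_compose_real[of \<theta>, OF \<theta>(1) smooth_mult[OF smooth_f0 smooth_f0]])
  moreover have "h \<circ> fst = (\<lambda>z. f z * g z)"
  proof
    fix z
    show "(h \<circ> fst) z = f z * g z"
      using f_zero[of z] k_zero[of z] \<theta>(3) by (cases "k z = 0") (simp_all add: h_def g_def k_def)
  qed
  moreover have "g -` {0} = fst -` V"
  proof (rule set_eqI)
    fix z
    show "z \<in> g -` {0} \<longleftrightarrow> z \<in> fst -` V"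
      using f_zero[of z] k_zero[of z] \<theta>(2)[of "(k z)\<^sup>2"] by (auto simp: g_def)
  qed
  ultimately show ?thesis using smooth_g unfolding g_def by blast
qed

end
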